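(* Let $n\ge 2$ and let $p_1,\dots,p_r$ be all the primes $p$ satisfying $p^{\acute v_p(n)}<\frac n2$. Then the number of vertices of full degree in $D_n$ is $$F(D_n)=n-\sum_{1\le i\le r}\left\lfloor\frac{n}{p_i^{\acute v_{p_i}(n)}}\right\rfloor+\sum_{1\le i<j\le r}\left\lfloor\frac{n}{p_i^{\acute v_{p_i}(n)}p_j^{\acute v_{p_j}(n)}}\right\rfloor-\cdots+(-1)^r\left\lfloor\frac{n}{\prod_{i=1}^r p_i^{\acute v_{p_i}(n)}}\right\rfloor.$$
   Context: $D_n$ is the graph with vertex set $\{1,\dots,n\}$ in which distinct $a,b$ are adjacent iff $\gcd(a,b)\mid n$ (the maximal Diophantine graph of order $n$). For a prime $p$, $v_p(n)$ is the exponent of $p$ in $n$ and $\acute v_p(n):=v_p(n)+1$. For a graph $G$ of order $n$, $F(G)$ is the number of vertices of degree $n-1$. *)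

theory Defs
  imports Complex_Main "HOL-Computational_Algebra.Primes"
begin

definition D_adj :: "nat \<Rightarrow> nat \<Rightarrow> nat \<Rightarrow> bool" where
  "D_adj n a b \<longleftrightarrow> a \<in> {1..n} \<and> b \<in> {1..n} \<and> a \<noteq> b \<and> gcd a b dvd n"

definition D_degree :: "nat \<Rightarrow> nat \<Rightarrow> nat" where
  "D_degree n a = card {b \<in> {1..n}. D_adj n a b}"

definition F_D :: "nat \<Rightarrow> nat" where
  "F_D n = card {a \<in> {1..n}. D_degree n a = n - 1}"

definition vacute :: "nat \<Rightarrow> nat \<Rightarrow> nat" where
  "vacute p n = multiplicity p n + 1"

end

theory Submission
  imports Defs
begin

text \<open>Write \<open>q\<^sub>p = p ^ (v\<^sub>p(n) + 1)\<close>. A vertex \<open>a\<close> misses a neighbour \<open>b\<close> iff \<open>gcd a b\<close> does not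
divide \<open>n\<close>, i.e. iff some \<open>q\<^sub>p\<close> divides both \<open>a\<close> and \<open>b\<close>. Two distinct multiples of \<open>q\<^sub>p\<close> lie in
\<open>{1..n}\<close> iff \<open>2 q\<^sub>p \<le> n\<close>, and \<open>2 q\<^sub>p = n\<close> is impossible because \<open>q\<^sub>p\<close> does not divide \<open>n\<close>.
So \<open>a\<close> has full degree iff it is a multiple of no \<open>q\<^sub>p\<close> with \<open>2 q\<^sub>p < n\<close>; these moduli are
pairwise coprime, and inclusion-exclusion counts the vertices avoiding all of them.\<close>

lemma int_card_sieve:
  fixes B :: "'p \<Rightarrow> 'a \<Rightarrow> bool"
  assumes "finite P" "finite A"
  shows "int (card {a\<in>A. \<forall>p\<in>P. \<not> B p a}) =
    (\<Sum>S\<in>Pow P. (-1) ^ card S * int (card {a\<in>A. \<forall>p\<in>S. B p a}))"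
  using assms
proof (induction P arbitrary: A rule: finite_induct)
  case empty
  then show ?case by simp
next
  case (insert x P)
  let ?A\<^sub>x = "{a\<in>A. B x a}"
  let ?term = "\<lambda>A S. (-1) ^ card S * int (card {a\<in>A. \<forall>p\<in>S. B p a})"
  have "{a\<in>A. \<forall>p\<in>P. \<not> B p a} = {a\<in>A. \<forall>p\<in>insert x P. \<not> B p a} \<union> {a\<in>?A\<^sub>x. \<forall>p\<in>P. \<not> B p a}"
    by auto
  then have "card {a\<in>A. \<forall>p\<in>P. \<not> B p a} =
      card {a\<in>A. \<forall>p\<in>insert x P. \<not> B p a} + card {a\<in>?A\<^sub>x. \<forall>p\<in>P. \<not> B p a}"
    by (simp only:) (rule card_Un_disjoint; use insert.prems in auto)
  then have avoid: "int (card {a\<in>A. \<forall>p\<in>insert x P. \<not> B p a}) =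
      int (card {a\<in>A. \<forall>p\<in>P. \<not> B p a}) - int (card {a\<in>?A\<^sub>x. \<forall>p\<in>P. \<not> B p a})"
    by simp
  have inj: "inj_on (insert x) (Pow P)"
    using insert.hyps by (intro inj_onI) (metis PowD insert_ident subset_iff)
  have "(\<Sum>S\<in>Pow (insert x P). ?term A S) = (\<Sum>S\<in>Pow P. ?term A S) + (\<Sum>S\<in>insert x ` Pow P. ?term A S)"
    unfolding Pow_insert by (rule sum.union_disjoint) (use insert.hyps in auto)
  also have "(\<Sum>S\<in>insert x ` Pow P. ?term A S) = (\<Sum>S\<in>Pow P. ?term A (insert x S))"
    by (rule sum.reindex_cong[OF inj]) simp_all
  also have "\<dots> = (\<Sum>S\<in>Pow P. - ?term ?A\<^sub>x S)"
  proof (rule sum.cong[OF refl])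
    fix S assume "S \<in> Pow P"
    then have "finite S" "x \<notin> S"
      using insert.hyps finite_subset by auto
    then have "card (insert x S) = Suc (card S)"
      by simp
    moreover have "{a\<in>A. \<forall>p\<in>insert x S. B p a} = {a\<in>?A\<^sub>x. \<forall>p\<in>S. B p a}"
      by auto
    ultimately show "?term A (insert x S) = - ?term ?A\<^sub>x S"
      by simp
  qed
  finally show ?case
    using avoid insert.IH[OF insert.prems] insert.IH[of ?A\<^sub>x] insert.prems(1)
    by (simp add: sum_negf)
qed

lemma card_multiples_atLeastAtMost:
  fixes d n :: nat
  assumes "d > 0"
  shows "card {a\<in>{1..n}. d dvd a} = n div d"
proof -
  have "{a\<in>{1..n}. d dvd a} = (\<lambda>k. d * k) ` {1..n div d}"
    using assms by (auto simp: less_eq_div_iff_mult_less_eq mult.commute)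
  moreover have "inj_on (\<lambda>k. d * k) {1..n div d}"
    using assms by (auto simp: inj_on_def)
  ultimately show ?thesis by (simp add: card_image)
qed

lemma prod_prime_powers_dvd_iff:
  fixes e :: "nat \<Rightarrow> nat"
  assumes "finite S" "\<And>p. p \<in> S \<Longrightarrow> prime p"
  shows "(\<Prod>p\<in>S. p ^ e p) dvd a \<longleftrightarrow> (\<forall>p\<in>S. p ^ e p dvd a)"
  using assms
proof (induction S rule: finite_induct)
  case empty
  then show ?case by simp
next
  case (insert x S)
  have "coprime (x ^ e x) (\<Prod>p\<in>S. p ^ e p)"
  proof (rule prod_coprime_right)
    fix p assume "p \<in> S"
    then have "coprime x p"
      using insert by (metis insert_iff primes_coprime)
    then show "coprime (x ^ e x) (p ^ e p)" by simp
  qed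
  with insert show ?case
    by (auto simp: divides_mult dest: dvd_mult_left dvd_mult_right)
qed

lemma card_common_multiples_prime_powers:
  fixes e :: "nat \<Rightarrow> nat"
  assumes "finite S" "\<And>p. p \<in> S \<Longrightarrow> prime p"
  shows "card {a\<in>{1..n}. \<forall>p\<in>S. p ^ e p dvd a} = n div (\<Prod>p\<in>S. p ^ e p)"
proof -
  have "{a\<in>{1..n}. \<forall>p\<in>S. p ^ e p dvd a} = {a\<in>{1..n}. (\<Prod>p\<in>S. p ^ e p) dvd a}"
    using prod_prime_powers_dvd_iff[OF assms] by auto
  also have "card \<dots> = n div (\<Prod>p\<in>S. p ^ e p)"
    using assms(2) by (intro card_multiples_atLeastAtMost) (simp add: prime_gt_0_nat prod_pos)
  finally show ?thesis .
qed

lemma power_vacute_not_dvd: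
  assumes "prime p" "n \<noteq> 0"
  shows "\<not> p ^ vacute p n dvd n"
proof
  assume "p ^ vacute p n dvd n"
  then have "vacute p n \<le> multiplicity p n"
    using assms by (intro multiplicity_geI) (auto simp: not_prime_unit)
  then show False by (simp add: vacute_def)
qed

lemma ex_prime_power_vacute_dvd_if_not_dvd:
  fixes d n :: nat
  assumes "d \<noteq> 0" "\<not> d dvd n"
  obtains p where "prime p" "p ^ vacute p n dvd d"
proof -
  obtain p where p: "prime p" "multiplicity p n < multiplicity p d"
    using multiplicity_le_imp_dvd[OF assms(1), of n] assms(2) by (meson not_le)
  then have "p ^ vacute p n dvd d"
    unfolding vacute_def by (intro multiplicity_dvd') simp
  with p(1) show ?thesis by (rule that)
qed

lemma double_le_if_distinct_multiples:
  fixes q a b n :: nat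
  assumes "q dvd a" "q dvd b" "a \<noteq> b" "a \<in> {1..n}" "b \<in> {1..n}"
  shows "2 * q \<le> n"
proof -
  have le_larger: "2 * q \<le> y" if "q dvd x" "q dvd y" "0 < x" "x < y" for x y
  proof -
    have "q \<le> x" using that by (simp add: dvd_imp_le)
    moreover have "q \<le> y - x" using that by (simp add: dvd_diff_nat dvd_imp_le)
    ultimately show ?thesis using that by linarith
  qed
  show ?thesis
  proof (cases "a < b")
    case True
    then have "2 * q \<le> b" using assms by (intro le_larger) auto
    then show ?thesis using assms by simp
  next
    case False
    then have "2 * q \<le> a" using assms by (intro le_larger[of b]) auto
    then show ?thesis using assms by simp
  qed
qed

lemma D_degree_full_iff:
  assumes "a \<in> {1..n}"
  shows "D_degree n a = n - 1 \<longleftrightarrow> (\<forall>b\<in>{1..n}. b \<noteq> a \<longrightarrow> gcd a b dvd n)"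
proof -
  let ?N = "{b\<in>{1..n}. D_adj n a b}"
  have "?N \<subseteq> {1..n} - {a}" and "card ({1..n} - {a}) = n - 1"
    using assms by (auto simp: D_adj_def)
  then have "D_degree n a = n - 1 \<longleftrightarrow> ?N = {1..n} - {a}"
    unfolding D_degree_def by (metis card_subset_eq finite_Diff finite_atLeastAtMost)
  also have "\<dots> \<longleftrightarrow> (\<forall>b\<in>{1..n}. b \<noteq> a \<longrightarrow> gcd a b dvd n)"
    using assms by (auto simp: D_adj_def)
  finally show ?thesis .
qed

lemma D_degree_full_iff_prime_powers:
  assumes a: "a \<in> {1..n}"
  shows "D_degree n a = n - 1 \<longleftrightarrow>
    (\<forall>p. prime p \<and> 2 * p ^ vacute p n < n \<longrightarrow> \<not> p ^ vacute p n dvd a)"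
proof -
  have "n \<noteq> 0" using a by simp
  have "(\<exists>b\<in>{1..n}. b \<noteq> a \<and> \<not> gcd a b dvd n) \<longleftrightarrow>
      (\<exists>p. prime p \<and> 2 * p ^ vacute p n < n \<and> p ^ vacute p n dvd a)"
  proof
    assume "\<exists>b\<in>{1..n}. b \<noteq> a \<and> \<not> gcd a b dvd n"
    then obtain b where b: "b \<in> {1..n}" "b \<noteq> a" "\<not> gcd a b dvd n" by blast
    then obtain p where p: "prime p" "p ^ vacute p n dvd gcd a b"
      using ex_prime_power_vacute_dvd_if_not_dvd[of "gcd a b" n] a by auto
    then have "2 * p ^ vacute p n \<le> n"
      using a b by (intro double_le_if_distinct_multiples[of _ a b]) auto
    moreover have "2 * p ^ vacute p n \<noteq> n"
      using power_vacute_not_dvd[OF p(1) \<open>n \<noteq> 0\<close>] by (metis dvd_triv_right)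
    ultimately show "\<exists>p. prime p \<and> 2 * p ^ vacute p n < n \<and> p ^ vacute p n dvd a"
      using p by auto
  next
    assume "\<exists>p. prime p \<and> 2 * p ^ vacute p n < n \<and> p ^ vacute p n dvd a"
    then obtain p where p: "prime p" "2 * p ^ vacute p n < n" "p ^ vacute p n dvd a" by blast
    define q where "q = p ^ vacute p n"
    define b where "b = (if a = q then 2 * q else q)"
    have "q > 0" using p(1) by (simp add: q_def prime_gt_0_nat)
    then have "b \<in> {1..n}" "b \<noteq> a" "q dvd gcd a b"
      using p by (auto simp: b_def q_def)
    moreover have "\<not> q dvd n"
      unfolding q_def by (rule power_vacute_not_dvd[OF p(1) \<open>n \<noteq> 0\<close>])
    ultimately show "\<exists>b\<in>{1..n}. b \<noteq> a \<and> \<not> gcd a b dvd n"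
      by (meson dvd_trans)
  qed
  then show ?thesis
    using D_degree_full_iff[OF a] by blast
qed

lemma finite_prime_powers_vacute_less:
  "finite {p. prime p \<and> 2 * p ^ vacute p n < n}"
proof -
  have "p \<le> n" if "prime p" "2 * p ^ vacute p n < n" for p
  proof -
    have "p \<le> p ^ vacute p n"
      using prime_gt_0_nat[OF that(1)] by (simp add: vacute_def Suc_le_eq)
    with that(2) show ?thesis by linarith
  qed
  then have "{p. prime p \<and> 2 * p ^ vacute p n < n} \<subseteq> {..n}"
    by blast
  then show ?thesis
    by (rule finite_subset) simp
qed

theorem mainTheorem5:
  fixes n :: nat
  assumes "n \<ge> 2"
  defines "P \<equiv> {p :: nat. prime p \<and> real (p ^ vacute p n) < real n / 2}"
  shows "int (F_D n) =
    (\<Sum>S\<in>Pow P. (-1) ^ card S * int (n div (\<Prod>p\<in>S. p ^ vacute p n)))"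
proof -
  have P_eq: "P = {p. prime p \<and> 2 * p ^ vacute p n < n}"
    unfolding P_def by (intro Collect_cong conj_cong refl) linarith
  have P_finite: "finite P"
    unfolding P_eq by (rule finite_prime_powers_vacute_less)
  have "int (F_D n) = int (card {a\<in>{1..n}. \<forall>p\<in>P. \<not> p ^ vacute p n dvd a})"
    unfolding F_D_def P_eq using D_degree_full_iff_prime_powers
    by (intro arg_cong[where f = "\<lambda>A. int (card A)"]) blast
  also have "\<dots> = (\<Sum>S\<in>Pow P. (-1) ^ card S * int (card {a\<in>{1..n}. \<forall>p\<in>S. p ^ vacute p n dvd a}))"
    using P_finite by (rule int_card_sieve) simp
  also have "\<dots> = (\<Sum>S\<in>Pow P. (-1) ^ card S * int (n div (\<Prod>p\<in>S. p ^ vacute p n)))"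
  proof (rule sum.cong[OF refl])
    fix S assume "S \<in> Pow P"
    then have "finite S" "\<And>p. p \<in> S \<Longrightarrow> prime p"
      using P_finite finite_subset by (auto simp: P_eq)
    then show "(-1) ^ card S * int (card {a\<in>{1..n}. \<forall>p\<in>S. p ^ vacute p n dvd a}) =
        (-1) ^ card S * int (n div (\<Prod>p\<in>S. p ^ vacute p n))"
      by (simp only: card_common_multiples_prime_powers)
  qed
  finally show ?thesis .
qed

end
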